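(* (i) If $\alpha<0$, there is a $\mathrm{TN}_3$ function $\Lambda:\mathbb{R}\to(0,\infty)$ such that $\Lambda^\alpha$ is not $\mathrm{TN}_3$ (e.g. $\Lambda(x)=e^{-x^2}$). (ii) Let $\alpha\ge0$, with the convention $0^0:=0$. Then $\Lambda^\alpha$ is $\mathrm{TN}_3$ for every $\mathrm{TN}_3$ function $\Lambda:\mathbb{R}\to\mathbb{R}$ if and only if $\alpha\ge1$.
   Context: A function $\Lambda:\mathbb{R}\to\mathbb{R}$ is $\mathrm{TN}_p$ if for all $1 \le r \le p$ and all real $x_1<\dots<x_r$, $y_1<\dots<y_r$, $\det(\Lambda(x_j-y_k))_{j,k=1}^r \ge 0$. $\Lambda^\alpha$ means $x\mapsto\Lambda(x)^\alpha$ (note $\mathrm{TN}_3$ functions are non-negative). *)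

theory Defs
  imports "HOL-Analysis.Analysis"
begin

definition detn :: "nat \<Rightarrow> (nat \<Rightarrow> nat \<Rightarrow> real) \<Rightarrow> real" where
  "detn r A = (\<Sum>\<sigma> | \<sigma> permutes {..<r}. of_int (sign \<sigma>) * (\<Prod>j<r. A j (\<sigma> j)))"

definition TN :: "nat \<Rightarrow> (real \<Rightarrow> real) \<Rightarrow> bool" where
  "TN p L \<longleftrightarrow> (\<forall>r. 1 \<le> r \<and> r \<le> p \<longrightarrow>
     (\<forall>x y :: nat \<Rightarrow> real. strict_mono_on {..<r} x \<longrightarrow> strict_mono_on {..<r} y \<longrightarrow>
        detn r (\<lambda>j k. L (x j - y k)) \<ge> 0))"

end

theory Submission
  imports Defs
begin

text \<open>For \<alpha> \<ge> 1, a 3\<times>3 matrix with non-negative entries and non-negative contiguous 2\<times>2 minors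
has non-negative determinant as soon as the Desnanot-Jacobi condensation inequality
(bf - ce)(dh - eg) \<le> (ae - bd)(ei - fh) holds. Raising all entries to the power t \<ge> 1 preserves
the 2\<times>2 minors, and the condensation inequality survives by the tangent bounds
t v^(t-1)(u - v) \<le> u^t - v^t of the convex function u^t: the factors t(bf)^(t-1), t(dh)^(t-1) on the
left and t(bd)^(t-1), t(fh)^(t-1) on the right agree because bf\<sqdot>dh = bd\<sqdot>fh.
The counterexamples are exp(-max 0 x), whose negative powers violate a 2\<times>2 minor, and the
half-wave sin on [0, \<pi>], which is TN3 because it agrees with the rank-two kernel sin(x - y)
where it matters, while for 0 \<le> \<alpha> < 1 its \<alpha>-th power has a 3\<times>3 minor 1 - 2\<sqdot>(1/2)^\<alpha> < 0.\<close>

definition det3 :: "real \<Rightarrow> real \<Rightarrow> real \<Rightarrow> real \<Rightarrow> real \<Rightarrow> real \<Rightarrow> real \<Rightarrow> real \<Rightarrow> real \<Rightarrow> real" where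
  "det3 a b c d e f g h i = a*(e*i - f*h) - b*(d*i - f*g) + c*(d*h - e*g)"

lemma detn_1: "detn 1 A = A 0 0"
proof -
  have "{..<1::nat} = insert 0 {}" by auto
  then show ?thesis unfolding detn_def
    by (simp add: sum_over_permutations_insert sign_compose permutation_swap_id sign_swap_id)
qed

lemma detn_2: "detn 2 A = A 0 0 * A 1 1 - A 0 1 * A 1 0"
proof -
  have "{..<2::nat} = insert 0 (insert 1 {})" by auto
  then show ?thesis unfolding detn_def
    by (simp add: sum_over_permutations_insert sign_compose permutation_swap_id sign_swap_id)
qed

lemma detn_3:
  "detn 3 A = det3 (A 0 0) (A 0 1) (A 0 2) (A 1 0) (A 1 1) (A 1 2) (A 2 0) (A 2 1) (A 2 2)"
proof -
  have "{..<3::nat} = insert 0 (insert 1 (insert 2 {}))" by auto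
  then show ?thesis unfolding detn_def det3_def
    by (simp add: sum_over_permutations_insert sign_compose permutation_swap_id sign_swap_id
        algebra_simps)
qed

lemma det3_Desnanot_Jacobi:
  "e * det3 a b c d e f g h i = (a*e - b*d)*(e*i - f*h) - (b*f - c*e)*(d*h - e*g)"
  unfolding det3_def by algebra

lemma det3_nonneg_of_condensation:
  assumes nonneg: "0\<le>a" "0\<le>b" "0\<le>c" "0\<le>d" "0\<le>e" "0\<le>f" "0\<le>g" "0\<le>h" "0\<le>i"
    and minor_11: "b*d \<le> a*e" and minor_33: "f*h \<le> e*i"
    and condensation: "e > 0 \<Longrightarrow> (b*f - c*e)*(d*h - e*g) \<le> (a*e - b*d)*(e*i - f*h)"
  shows "0 \<le> det3 a b c d e f g h i"
proof (cases "e = 0")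
  case True
  have "0 \<le> b*d" "0 \<le> f*h" using nonneg by simp_all
  then have "b*d = 0" "f*h = 0" using minor_11 minor_33 True by simp_all
  then have "det3 a b c d e f g h i = b*f*g + c*d*h"
    unfolding det3_def using True by algebra
  then show ?thesis using nonneg by simp
next
  case False
  then have "e > 0" using nonneg by simp
  moreover have "0 \<le> e * det3 a b c d e f g h i"
    unfolding det3_Desnanot_Jacobi using condensation[OF \<open>e > 0\<close>] by simp
  ultimately show ?thesis by (simp add: zero_le_mult_iff)
qed

lemma condensation_of_det3_nonneg:
  assumes "e > 0" "0 \<le> det3 a b c d e f g h i"
  shows "(b*f - c*e)*(d*h - e*g) \<le> (a*e - b*d)*(e*i - f*h)"
proof -
  have "0 \<le> e * det3 a b c d e f g h i" using assms by simp
  then show ?thesis unfolding det3_Desnanot_Jacobi by simp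
qed

lemma condensation_of_sign_change:
  fixes a b c d e f g h i :: real
  assumes "b*d \<le> a*e" "f*h \<le> e*i" "c*e \<le> b*f" "e*g \<le> d*h"
    and "b*f \<le> c*e \<or> d*h \<le> e*g"
  shows "(b*f - c*e)*(d*h - e*g) \<le> (a*e - b*d)*(e*i - f*h)"
proof -
  have "(b*f - c*e)*(d*h - e*g) \<le> 0"
    using assms(3-5) by (auto simp: mult_le_0_iff)
  also have "0 \<le> (a*e - b*d)*(e*i - f*h)" using assms(1,2) by simp
  finally show ?thesis .
qed

text \<open>Lowering the corner entries c and g only increases the left-hand side of the condensation
inequality, and for a singular matrix with e > 0 it is an equality.\<close>

lemma condensation_of_singular_minorant:
  assumes singular: "det3 a b c' d e f g' h i = 0" and "0 < e"
    and "c' \<le> c" "g' \<le> g" "c*e \<le> b*f" "e*g \<le> d*h"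
  shows "(b*f - c*e)*(d*h - e*g) \<le> (a*e - b*d)*(e*i - f*h)"
proof -
  have "(b*f - c*e)*(d*h - e*g) \<le> (b*f - c'*e)*(d*h - e*g')"
  proof (rule mult_mono)
    have "c'*e \<le> c*e" "e*g' \<le> e*g"
      using assms(2-4) by (simp_all add: mult_right_mono mult_left_mono)
    then show "b*f - c*e \<le> b*f - c'*e" "d*h - e*g \<le> d*h - e*g'"
      and "0 \<le> b*f - c'*e" "0 \<le> d*h - e*g"
      using assms(5,6) by simp_all
  qed
  also have "\<dots> = (a*e - b*d)*(e*i - f*h)"
    using det3_Desnanot_Jacobi[of e a b c' d f g' h i] singular by simp
  finally show ?thesis .
qed

definition minor3 :: "(real \<Rightarrow> real) \<Rightarrow> real \<Rightarrow> real \<Rightarrow> real \<Rightarrow> real \<Rightarrow> real \<Rightarrow> real \<Rightarrow> real" where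
  "minor3 L x1 x2 x3 y1 y2 y3 =
     det3 (L (x1-y1)) (L (x1-y2)) (L (x1-y3)) (L (x2-y1)) (L (x2-y2)) (L (x2-y3))
          (L (x3-y1)) (L (x3-y2)) (L (x3-y3))"

lemma strict_mono_on_lessThan_2: "strict_mono_on {..<2::nat} (x::nat \<Rightarrow> real) \<longleftrightarrow> x 0 < x 1"
  by (auto simp: strict_mono_on_def less_Suc_eq numeral_2_eq_2)

lemma strict_mono_on_lessThan_3:
  "strict_mono_on {..<3::nat} (x::nat \<Rightarrow> real) \<longleftrightarrow> x 0 < x 1 \<and> x 1 < x 2"
  by (auto simp: strict_mono_on_def less_Suc_eq numeral_3_eq_3 numeral_2_eq_2)

lemma TN3I:
  assumes nonneg: "\<And>z. 0 \<le> L z"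
    and minor2: "\<And>x1 x2 y1 y2. x1 < x2 \<Longrightarrow> y1 < y2 \<Longrightarrow> L (x1-y2) * L (x2-y1) \<le> L (x1-y1) * L (x2-y2)"
    and minor3: "\<And>x1 x2 x3 y1 y2 y3. x1 < x2 \<Longrightarrow> x2 < x3 \<Longrightarrow> y1 < y2 \<Longrightarrow> y2 < y3 \<Longrightarrow>
                   0 \<le> minor3 L x1 x2 x3 y1 y2 y3"
  shows "TN 3 L"
  unfolding TN_def
proof (intro allI impI)
  fix r :: nat and x y :: "nat \<Rightarrow> real"
  assume "1 \<le> r \<and> r \<le> 3" and x: "strict_mono_on {..<r} x" and y: "strict_mono_on {..<r} y"
  then consider "r = 1" | "r = 2" | "r = 3" by linarith
  then show "0 \<le> detn r (\<lambda>j k. L (x j - y k))"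
  proof cases
    case 1 then show ?thesis using detn_1[of "\<lambda>j k. L (x j - y k)"] nonneg by simp
  next
    case 2 then show ?thesis
      using x y minor2[of "x 0" "x 1" "y 0" "y 1"] by (simp add: detn_2 strict_mono_on_lessThan_2)
  next
    case 3 then show ?thesis
      using x y minor3[of "x 0" "x 1" "x 2" "y 0" "y 1" "y 2"]
      by (simp add: detn_3 strict_mono_on_lessThan_3 minor3_def)
  qed
qed

lemma TN3_nonneg:
  assumes "TN 3 L" shows "0 \<le> L z"
proof -
  have "0 \<le> detn 1 (\<lambda>j k. L ((\<lambda>_. z) j - (\<lambda>_. 0) k))"
    by (rule assms[unfolded TN_def, rule_format]) (auto simp: strict_mono_on_def)
  then show ?thesis by (simp only: detn_1) simp
qed

lemma TN3_minor2:
  assumes "TN 3 L" "x1 < x2" "y1 < y2"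
  shows "L (x1-y2) * L (x2-y1) \<le> L (x1-y1) * L (x2-y2)"
proof -
  let ?x = "\<lambda>i::nat. if i = 0 then x1 else x2" and ?y = "\<lambda>i::nat. if i = 0 then y1 else y2"
  have "0 \<le> detn 2 (\<lambda>j k. L (?x j - ?y k))"
    using assms unfolding TN_def by (simp add: strict_mono_on_lessThan_2)
  then show ?thesis by (simp add: detn_2)
qed

lemma TN3_minor3:
  assumes "TN 3 L" "x1 < x2" "x2 < x3" "y1 < y2" "y2 < y3"
  shows "0 \<le> minor3 L x1 x2 x3 y1 y2 y3"
proof -
  let ?x = "\<lambda>i::nat. if i = 0 then x1 else if i = 1 then x2 else x3"
  let ?y = "\<lambda>i::nat. if i = 0 then y1 else if i = 1 then y2 else y3"
  have "0 \<le> detn 3 (\<lambda>j k. L (?x j - ?y k))"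
    using assms unfolding TN_def by (simp add: strict_mono_on_lessThan_3)
  then show ?thesis by (simp add: detn_3 minor3_def)
qed

section \<open>Powers of exponent at least one\<close>

lemma powr_tangent_le:
  fixes u v t :: real
  assumes "0 \<le> u" "0 \<le> v" "1 \<le> t"
  shows "t * v powr (t-1) * (u - v) \<le> u powr t - v powr t"
proof (cases "0 < u \<and> 0 < v")
  case True
  then show ?thesis using \<open>1 \<le> t\<close>
    by (intro convex_on_imp_above_tangent[where A = "{0<..}", OF powr_convex])
       (auto intro!: derivative_eq_intros simp: interior_open)
next
  case False
  then consider "v = 0" | "u = 0" "0 < v" using assms by force
  then show ?thesis
  proof cases
    case 2
    then have "v powr t = v * v powr (t-1)" by (simp add: powr_mult_base)
    moreover have "v powr t \<le> t * v powr t" using \<open>1 \<le> t\<close> by (simp add: mult_le_cancel_right1)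
    ultimately show ?thesis using 2 by (simp add: algebra_simps)
  qed (use assms in simp)
qed

lemma powr_diff_product_mono:
  fixes x y P Q R S a b t :: real
  assumes P: "0 \<le> P" "P \<le> x" and Q: "0 \<le> Q" "Q \<le> y"
    and a: "0 \<le> a" "a \<le> R" and b: "0 \<le> b" "b \<le> S"
    and PQ: "P*Q = R*S" and le: "(R-a)*(S-b) \<le> (x-P)*(y-Q)" and t: "1 \<le> t"
  shows "(R powr t - a powr t)*(S powr t - b powr t) \<le> (x powr t - P powr t)*(y powr t - Q powr t)"
proof -
  have "R powr t - a powr t \<le> t * R powr (t-1) * (R - a)"
    and "S powr t - b powr t \<le> t * S powr (t-1) * (S - b)"
    using powr_tangent_le[of a R t] powr_tangent_le[of b S t] a b t by (simp_all add: algebra_simps)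
  then have "(R powr t - a powr t)*(S powr t - b powr t)
             \<le> (t * R powr (t-1) * (R - a)) * (t * S powr (t-1) * (S - b))"
    using a b t by (intro mult_mono) (auto simp: powr_mono2)
  also have "\<dots> = t*t * (R*S) powr (t-1) * ((R-a)*(S-b))"
    by (simp add: powr_mult algebra_simps)
  also have "\<dots> \<le> t*t * (P*Q) powr (t-1) * ((x-P)*(y-Q))"
    unfolding PQ using le by (intro mult_left_mono) auto
  also have "\<dots> = (t * P powr (t-1) * (x - P)) * (t * Q powr (t-1) * (y - Q))"
    by (simp add: powr_mult algebra_simps)
  also have "\<dots> \<le> (x powr t - P powr t)*(y powr t - Q powr t)"
    using powr_tangent_le[of x P t] powr_tangent_le[of y Q t] P Q t
    by (intro mult_mono) (auto simp: powr_mono2)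
  finally show ?thesis .
qed

lemma det3_powr_nonneg:
  fixes t :: real
  assumes nonneg: "0\<le>a" "0\<le>b" "0\<le>c" "0\<le>d" "0\<le>e" "0\<le>f" "0\<le>g" "0\<le>h" "0\<le>i"
    and minors: "b*d \<le> a*e" "f*h \<le> e*i" "c*e \<le> b*f" "e*g \<le> d*h"
    and det: "0 \<le> det3 a b c d e f g h i" and t: "1 \<le> t"
  shows "0 \<le> det3 (a powr t) (b powr t) (c powr t) (d powr t) (e powr t)
                  (f powr t) (g powr t) (h powr t) (i powr t)"
proof (rule det3_nonneg_of_condensation)
  show "b powr t * d powr t \<le> a powr t * e powr t" "f powr t * h powr t \<le> e powr t * i powr t"
    using minors nonneg t by (simp_all add: powr_mult[symmetric] powr_mono2)
  assume "e powr t > 0"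
  then have "e > 0" using nonneg by (cases "e = 0") auto
  then have "(b*f - c*e)*(d*h - e*g) \<le> (a*e - b*d)*(e*i - f*h)"
    using det by (rule condensation_of_det3_nonneg)
  then have "((b*f) powr t - (c*e) powr t)*((d*h) powr t - (e*g) powr t)
             \<le> ((a*e) powr t - (b*d) powr t)*((e*i) powr t - (f*h) powr t)"
    using nonneg minors t by (intro powr_diff_product_mono) (auto simp: algebra_simps)
  then show "(b powr t * f powr t - c powr t * e powr t) * (d powr t * h powr t - e powr t * g powr t)
    \<le> (a powr t * e powr t - b powr t * d powr t) * (e powr t * i powr t - f powr t * h powr t)"
    by (simp add: powr_mult)
qed (use nonneg in auto)

lemma TN3_powr:
  assumes L: "TN 3 L" and t: "1 \<le> t"
  shows "TN 3 (\<lambda>x. L x powr t)"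
proof (rule TN3I)
  show "0 \<le> L z powr t" for z by simp
  show "L (x1-y2) powr t * L (x2-y1) powr t \<le> L (x1-y1) powr t * L (x2-y2) powr t"
    if "x1 < x2" "y1 < y2" for x1 x2 y1 y2
    using TN3_minor2[OF L that] TN3_nonneg[OF L] t by (simp add: powr_mult[symmetric] powr_mono2)
  show "0 \<le> minor3 (\<lambda>x. L x powr t) x1 x2 x3 y1 y2 y3"
    if "x1 < x2" "x2 < x3" "y1 < y2" "y2 < y3" for x1 x2 x3 y1 y2 y3
    unfolding minor3_def
    using TN3_nonneg[OF L] TN3_minor2[OF L] TN3_minor3[OF L that, unfolded minor3_def] that t
    by (intro det3_powr_nonneg) (auto simp: algebra_simps)
qed

section \<open>Negative exponents\<close>

definition exp_neg_ramp :: "real \<Rightarrow> real" where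
  "exp_neg_ramp z = exp (- max 0 z)"

lemma exp_neg_ramp_pos: "0 < exp_neg_ramp z"
  by (simp add: exp_neg_ramp_def)

lemma exp_neg_ramp_mult: "exp_neg_ramp u * exp_neg_ramp v = exp (- (max 0 u + max 0 v))"
  unfolding exp_neg_ramp_def by (simp add: exp_add[symmetric])

lemma exp_neg_ramp_minor2:
  "x1 < x2 \<Longrightarrow> y1 < y2 \<Longrightarrow>
     exp_neg_ramp (x1-y2) * exp_neg_ramp (x2-y1) \<le> exp_neg_ramp (x1-y1) * exp_neg_ramp (x2-y2)"
  unfolding exp_neg_ramp_mult by (simp add: max_def)

lemma exp_neg_ramp_TN3: "TN 3 exp_neg_ramp"
proof (rule TN3I)
  show "0 \<le> exp_neg_ramp z" for z by (simp add: exp_neg_ramp_def)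
  show "exp_neg_ramp (x1-y2) * exp_neg_ramp (x2-y1) \<le> exp_neg_ramp (x1-y1) * exp_neg_ramp (x2-y2)"
    if "x1 < x2" "y1 < y2" for x1 x2 y1 y2
    using exp_neg_ramp_minor2 that .
  fix x1 x2 x3 y1 y2 y3 :: real
  assume xy: "x1 < x2" "x2 < x3" "y1 < y2" "y2 < y3"
  let ?L = exp_neg_ramp
  have minors: "?L (x1-y2) * ?L (x2-y1) \<le> ?L (x1-y1) * ?L (x2-y2)"
    "?L (x2-y3) * ?L (x3-y2) \<le> ?L (x2-y2) * ?L (x3-y3)"
    "?L (x1-y3) * ?L (x2-y2) \<le> ?L (x1-y2) * ?L (x2-y3)"
    "?L (x2-y2) * ?L (x3-y1) \<le> ?L (x2-y1) * ?L (x3-y2)"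
    using exp_neg_ramp_minor2[of x1 x2 y1 y2] exp_neg_ramp_minor2[of x2 x3 y2 y3]
      exp_neg_ramp_minor2[of x1 x2 y2 y3] exp_neg_ramp_minor2[of x2 x3 y1 y2] xy
    by (simp_all add: mult.commute)
  moreover have "?L (x1-y2) * ?L (x2-y3) \<le> ?L (x1-y3) * ?L (x2-y2)
               \<or> ?L (x2-y1) * ?L (x3-y2) \<le> ?L (x2-y2) * ?L (x3-y1)"
    unfolding exp_neg_ramp_mult using xy by (simp add: max_def)
  ultimately show "0 \<le> minor3 ?L x1 x2 x3 y1 y2 y3"
    unfolding minor3_def
    by (intro det3_nonneg_of_condensation condensation_of_sign_change)
       (simp_all add: exp_neg_ramp_def)
qed

lemma exp_neg_ramp_powr_not_TN3:
  assumes "\<alpha> < 0" shows "\<not> TN 3 (\<lambda>x. exp_neg_ramp x powr \<alpha>)"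
proof
  assume "TN 3 (\<lambda>x. exp_neg_ramp x powr \<alpha>)"
  then have "exp_neg_ramp (0-1) powr \<alpha> * exp_neg_ramp (1-0) powr \<alpha>
             \<le> exp_neg_ramp (0-0) powr \<alpha> * exp_neg_ramp (1-1) powr \<alpha>"
    by (rule TN3_minor2) simp_all
  then have "exp (- \<alpha>) \<le> 1" by (simp add: exp_neg_ramp_def powr_def)
  then show False using assms by simp
qed

section \<open>Exponents below one\<close>

definition sin_half_wave :: "real \<Rightarrow> real" where
  "sin_half_wave z = (if 0 \<le> z \<and> z \<le> pi then sin z else 0)"

lemma sin_half_wave_nonneg: "0 \<le> sin_half_wave z"
  unfolding sin_half_wave_def by (simp add: sin_ge_zero)

lemma sin_half_wave_pos_imp: "0 < sin_half_wave z \<Longrightarrow> 0 \<le> z \<and> z \<le> pi"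
  unfolding sin_half_wave_def by (auto split: if_splits)

lemma sin_half_wave_eq_sin: "0 \<le> z \<Longrightarrow> z \<le> pi \<Longrightarrow> sin_half_wave z = sin z"
  unfolding sin_half_wave_def by simp

lemma sin_le_sin_half_wave:
  assumes "-pi \<le> z" "z \<le> 2*pi" shows "sin z \<le> sin_half_wave z"
proof (cases "0 \<le> z \<and> z \<le> pi")
  case False
  then have "sin z \<le> 0"
    using assms sin_ge_zero[of "-z"] sin_ge_zero[of "z - pi"] by (auto simp: sin_diff)
  then show ?thesis using sin_half_wave_nonneg[of z] by linarith
qed (simp add: sin_half_wave_eq_sin)

lemma sin_diff_minor2:
  fixes x1 x2 y1 y2 :: real
  shows   "sin (x1-y1) * sin (x2-y2) - sin (x1-y2) * sin (x2-y1) = sin (x2-x1) * sin (y2-y1)"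
  unfolding sin_diff cos_diff by algebra

lemma det3_sin_diff_eq_0:
  fixes x1 x2 x3 y1 y2 y3 :: real
  shows   "det3 (sin (x1-y1)) (sin (x1-y2)) (sin (x1-y3)) (sin (x2-y1)) (sin (x2-y2)) (sin (x2-y3))
        (sin (x3-y1)) (sin (x3-y2)) (sin (x3-y3)) = 0"
  unfolding det3_def sin_diff by algebra

lemma sin_half_wave_minor2:
  assumes "x1 < x2" "y1 < y2"
  shows "sin_half_wave (x1-y2) * sin_half_wave (x2-y1) \<le> sin_half_wave (x1-y1) * sin_half_wave (x2-y2)"
proof (cases "0 \<le> x1-y2 \<and> x2-y1 \<le> pi")
  case True
  then have "0 \<le> sin (x2-x1) * sin (y2-y1)"
    using assms by (intro mult_nonneg_nonneg sin_ge_zero) auto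
  then show ?thesis
    using True assms sin_diff_minor2[of x1 y1 x2 y2] by (simp add: sin_half_wave_eq_sin)
next
  case False
  then have "sin_half_wave (x1-y2) * sin_half_wave (x2-y1) = 0"
    unfolding sin_half_wave_def by auto
  moreover have "0 \<le> sin_half_wave (x1-y1) * sin_half_wave (x2-y2)"
    by (intro mult_nonneg_nonneg sin_half_wave_nonneg)
  ultimately show ?thesis by linarith
qed

text \<open>If the four off-diagonal entries b, d, f, h are positive, all entries except the corners
c and g lie in the window [0, \<pi>] where the half-wave agrees with the rank-two kernel sin(x - y),
and the corners only dominate the corresponding values of sin.\<close>

lemma sin_half_wave_condensation:
  assumes xy: "x1 < x2" "x2 < x3" "y1 < y2" "y2 < y3"
  defines "a \<equiv> sin_half_wave (x1-y1)" and "b \<equiv> sin_half_wave (x1-y2)"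
    and "c \<equiv> sin_half_wave (x1-y3)" and "d \<equiv> sin_half_wave (x2-y1)"
    and "e \<equiv> sin_half_wave (x2-y2)" and "f \<equiv> sin_half_wave (x2-y3)"
    and "g \<equiv> sin_half_wave (x3-y1)" and "h \<equiv> sin_half_wave (x3-y2)"
    and "i \<equiv> sin_half_wave (x3-y3)"
  assumes "0 < e"
  shows "(b*f - c*e)*(d*h - e*g) \<le> (a*e - b*d)*(e*i - f*h)"
proof -
  have minors: "b*d \<le> a*e" "f*h \<le> e*i" "c*e \<le> b*f" "e*g \<le> d*h"
    unfolding a_def b_def c_def d_def e_def f_def g_def h_def i_def
    using sin_half_wave_minor2[of x1 x2 y1 y2] sin_half_wave_minor2[of x2 x3 y2 y3]
      sin_half_wave_minor2[of x1 x2 y2 y3] sin_half_wave_minor2[of x2 x3 y1 y2] xy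
    by (simp_all add: mult.commute)
  show ?thesis
  proof (cases "0 < b \<and> 0 < f \<and> 0 < d \<and> 0 < h")
    case False
    moreover have "0 \<le> b" "0 \<le> f" "0 \<le> d" "0 \<le> h"
      unfolding b_def d_def f_def h_def by (simp_all add: sin_half_wave_nonneg)
    ultimately have "b = 0 \<or> f = 0 \<or> d = 0 \<or> h = 0" by auto
    then have sign_change: "b*f \<le> c*e \<or> d*h \<le> e*g"
      unfolding c_def e_def g_def using sin_half_wave_nonneg by auto
    show ?thesis using minors sign_change by (rule condensation_of_sign_change)
  next
    case True
    then have window: "0 \<le> x1-y2" "x2-y1 \<le> pi" "0 \<le> x2-y3" "x3-y2 \<le> pi"
      and "0 \<le> x2-y2" "x2-y2 \<le> pi"
      using \<open>0 < e\<close> unfolding b_def d_def e_def f_def h_def by (auto dest: sin_half_wave_pos_imp)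
    then have "a = sin (x1-y1)" "b = sin (x1-y2)" "d = sin (x2-y1)" "e = sin (x2-y2)"
      "f = sin (x2-y3)" "h = sin (x3-y2)" "i = sin (x3-y3)"
      unfolding a_def b_def d_def e_def f_def h_def i_def using xy
      by (simp_all add: sin_half_wave_eq_sin)
    moreover have "sin (x1-y3) \<le> c" "sin (x3-y1) \<le> g"
      unfolding c_def g_def using window xy by (intro sin_le_sin_half_wave; simp)+
    ultimately show ?thesis
      using \<open>0 < e\<close> minors det3_sin_diff_eq_0[of x1 y1 y2 y3 x2 x3]
      by (intro condensation_of_singular_minorant[of a b "sin (x1-y3)" d e f "sin (x3-y1)" h i])
         simp_all
  qed
qed

lemma sin_half_wave_TN3: "TN 3 sin_half_wave"
proof (rule TN3I)
  show "0 \<le> sin_half_wave z" for z by (rule sin_half_wave_nonneg)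
  show "sin_half_wave (x1-y2) * sin_half_wave (x2-y1) \<le> sin_half_wave (x1-y1) * sin_half_wave (x2-y2)"
    if "x1 < x2" "y1 < y2" for x1 x2 y1 y2
    using sin_half_wave_minor2 that .
  show "0 \<le> minor3 sin_half_wave x1 x2 x3 y1 y2 y3"
    if "x1 < x2" "x2 < x3" "y1 < y2" "y2 < y3" for x1 x2 x3 y1 y2 y3
    unfolding minor3_def
    using sin_half_wave_minor2[of x1 x2 y1 y2] sin_half_wave_minor2[of x2 x3 y2 y3] that
      sin_half_wave_condensation[OF that]
    by (intro det3_nonneg_of_condensation) (simp_all add: sin_half_wave_nonneg)
qed

text \<open>At the nodes x = (\<pi>/2, 3\<pi>/4, \<pi>), y = (0, \<pi>/4, \<pi>/2) the 3\<times>3 minor of the half-wave equals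
1 - 2 s^2 = 0 with s = sin(\<pi>/4), and replacing s^2 = 1/2 by (1/2)^\<alpha> makes it negative.\<close>

lemma sin_half_wave_powr_not_TN3:
  assumes "0 \<le> \<alpha>" "\<alpha> < 1" shows "\<not> TN 3 (\<lambda>x. sin_half_wave x powr \<alpha>)"
proof
  assume TN: "TN 3 (\<lambda>x. sin_half_wave x powr \<alpha>)"
  define s where "s = sin (pi/4)"
  have "s * s = 1/2" unfolding s_def sin_45 by simp
  have half_wave_values: "sin_half_wave (pi/2) = 1" "sin_half_wave (pi/4) = s" "sin_half_wave (3*pi/4) = s"
    "sin_half_wave 0 = 0" "sin_half_wave pi = 0"
    using sin_pi_minus[of "pi/4"] unfolding s_def sin_half_wave_def
    by (simp_all add: field_simps)
  have "0 \<le> minor3 (\<lambda>x. sin_half_wave x powr \<alpha>) (pi/2) (3*pi/4) pi 0 (pi/4) (pi/2)"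
    by (rule TN3_minor3[OF TN]) (simp_all add: field_simps)
  moreover have "pi/2 - pi/4 = pi/4" "3*pi/4 - pi/4 = pi/2" "3*pi/4 - pi/2 = pi/4"
    "pi - pi/4 = 3*pi/4" "pi - pi/2 = pi/2"
    by (simp_all add: field_simps)
  ultimately have "0 \<le> 1 - 2 * (s powr \<alpha> * s powr \<alpha>)"
    unfolding minor3_def det3_def by (simp add: half_wave_values)
  moreover have "s powr \<alpha> * s powr \<alpha> = (1/2) powr \<alpha>"
  proof -
    have "0 < s" unfolding s_def by (rule sin_gt_zero) auto
    then have "s powr \<alpha> * s powr \<alpha> = (s * s) powr \<alpha>" by (simp add: powr_mult)
    then show ?thesis by (simp only: \<open>s * s = 1/2\<close>)
  qed
  moreover have "(1/2::real) powr 1 < (1/2) powr \<alpha>"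
    using assms by (intro powr_less_mono') auto
  ultimately show False by simp
qed

theorem mainTheorem18:
  shows "(\<forall>\<alpha>::real. \<alpha> < 0 \<longrightarrow>
            (\<exists>L :: real \<Rightarrow> real. (\<forall>x. L x > 0) \<and> TN 3 L \<and>
               \<not> TN 3 (\<lambda>x. L x powr \<alpha>)))
       \<and> (\<forall>\<alpha>::real. \<alpha> \<ge> 0 \<longrightarrow>
            ((\<forall>L :: real \<Rightarrow> real. TN 3 L \<longrightarrow> TN 3 (\<lambda>x. L x powr \<alpha>)) \<longleftrightarrow> \<alpha> \<ge> 1))"
proof (intro conjI allI impI)
  fix \<alpha> :: real
  assume "\<alpha> < 0"
  then show "\<exists>L. (\<forall>x. L x > 0) \<and> TN 3 L \<and> \<not> TN 3 (\<lambda>x. L x powr \<alpha>)"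
    using exp_neg_ramp_pos exp_neg_ramp_TN3 exp_neg_ramp_powr_not_TN3 by blast
next
  fix \<alpha> :: real
  assume "\<alpha> \<ge> 0"
  show "(\<forall>L. TN 3 L \<longrightarrow> TN 3 (\<lambda>x. L x powr \<alpha>)) \<longleftrightarrow> \<alpha> \<ge> 1"
  proof
    assume "\<forall>L. TN 3 L \<longrightarrow> TN 3 (\<lambda>x. L x powr \<alpha>)"
    then show "\<alpha> \<ge> 1"
      using \<open>\<alpha> \<ge> 0\<close> sin_half_wave_TN3 sin_half_wave_powr_not_TN3 by (meson not_le)
  qed (use TN3_powr in blast)
qed

end
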